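(* Let $h$ be smooth near $(0,0)$ with Taylor expansion $h(x,y)=a^2x^2+b^2y^2+\sum_{m+n\ge3}h_{m,n}x^my^n$, $a,b>0$, and let $z$ be a $C^3$ solution of $z_x^2+z_y^2=h$ near $(0,0)$ with $z(0,0)=0$. If $a\ne b$, then $z(x,y)=\frac12(\pm ax^2\pm by^2)+O((|x|+|y|)^3)$ for some choice of signs. If $a=b$, the same conclusion holds after a change of coordinates $(x,y)\mapsto(x\cos\xi+y\sin\xi,\,-x\sin\xi+y\cos\xi)$ for some angle $\xi$. *)

theory Defs
  imports "HOL-Analysis.Analysis" "HOL-Library.Landau_Symbols"
begin

definition px :: "(real \<times> real \<Rightarrow> real) \<Rightarrow> real \<times> real \<Rightarrow> real" where
  "px f p = deriv (\<lambda>t. f (t, snd p)) (fst p)"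

definition py :: "(real \<times> real \<Rightarrow> real) \<Rightarrow> real \<times> real \<Rightarrow> real" where
  "py f p = deriv (\<lambda>t. f (fst p, t)) (snd p)"

fun Ck_on :: "nat \<Rightarrow> (real \<times> real \<Rightarrow> real) \<Rightarrow> (real \<times> real) set \<Rightarrow> bool" where
  "Ck_on 0 f U = continuous_on U f"
| "Ck_on (Suc k) f U =
     (continuous_on U f \<and>
      (\<forall>p\<in>U. (\<lambda>t. f (t, snd p)) differentiable (at (fst p)) \<and>
              (\<lambda>t. f (fst p, t)) differentiable (at (snd p))) \<and>
      Ck_on k (px f) U \<and> Ck_on k (py f) U)"

definition smooth_on :: "(real \<times> real \<Rightarrow> real) \<Rightarrow> (real \<times> real) set \<Rightarrow> bool" where
  "smooth_on f U \<longleftrightarrow> (\<forall>k. Ck_on k f U)"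

end

theory Submission
  imports Defs
begin

text \<open>Write \<open>\<rho> = |x| + |y|\<close> (\<open>norm1\<close> below). Since \<open>h(0) = 0\<close>, the eikonal equation forces \<open>\<nabla>z(0) = 0\<close>,
  so Taylor's theorem gives \<open>z = (A x\<^sup>2 + 2 B x y + C y\<^sup>2)/2 + O(\<rho>\<^sup>3)\<close> with \<open>A, B, C\<close> the second
  partials of \<open>z\<close> at the origin, and \<open>z\<^sub>x = A x + B y + O(\<rho>\<^sup>2)\<close>, \<open>z\<^sub>y = B x + C y + O(\<rho>\<^sup>2)\<close>.
  Comparing the quadratic terms of \<open>z\<^sub>x\<^sup>2 + z\<^sub>y\<^sup>2 = h\<close> yields
  \<open>A\<^sup>2 + B\<^sup>2 = a\<^sup>2\<close>, \<open>B (A + C) = 0\<close> and \<open>B\<^sup>2 + C\<^sup>2 = b\<^sup>2\<close>. If \<open>B = 0\<close> then \<open>A = \<plusminus>a\<close> and \<open>C = \<plusminus>b\<close>.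
  Otherwise \<open>C = -A\<close>, hence \<open>a = b\<close>, and writing \<open>(A, B) = a (cos \<phi>, sin \<phi>)\<close>, the rotation by
  \<open>-\<phi>/2\<close> turns the Hessian into \<open>diag(a, -a)\<close>.

  Equality of the mixed partials at the origin is obtained by
  comparing the second-order expansions of \<open>z\<close> and of \<open>z\<close> with its arguments swapped.\<close>

abbreviation norm1 :: "real \<times> real \<Rightarrow> real" where
  "norm1 p \<equiv> \<bar>fst p\<bar> + \<bar>snd p\<bar>"

lemma Ck_on_imp_continuous_on: "Ck_on k f U \<Longrightarrow> continuous_on U f"
  by (cases k) auto

lemma Ck_on_Suc_has_px:
  assumes "Ck_on (Suc k) f U" and "(x, y) \<in> U"
  shows "((\<lambda>t. f (t, y)) has_real_derivative px f (x, y)) (at x)"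
proof -
  have "(\<lambda>t. f (t, y)) differentiable (at x)" using assms by fastforce
  then show ?thesis unfolding px_def by (simp add: DERIV_deriv_iff_real_differentiable)
qed

lemma Ck_on_Suc_has_py:
  assumes "Ck_on (Suc k) f U" and "(x, y) \<in> U"
  shows "((\<lambda>t. f (x, t)) has_real_derivative py f (x, y)) (at y)"
proof -
  have "(\<lambda>t. f (x, t)) differentiable (at y)" using assms by fastforce
  then show ?thesis unfolding py_def by (simp add: DERIV_deriv_iff_real_differentiable)
qed

lemma px_swap: "px (\<lambda>p. f (prod.swap p)) = (\<lambda>p. py f (prod.swap p))"
  by (simp add: fun_eq_iff px_def py_def)

lemma py_swap: "py (\<lambda>p. f (prod.swap p)) = (\<lambda>p. px f (prod.swap p))"
  by (simp add: fun_eq_iff px_def py_def)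

lemma Ck_on_swap: "Ck_on k f U \<Longrightarrow> Ck_on k (\<lambda>p. f (prod.swap p)) (prod.swap -` U)"
proof (induction k arbitrary: f)
  case 0
  then show ?case
    by (auto intro!: continuous_on_compose2[of U f] continuous_intros)
next
  case (Suc k)
  then show ?case
    by (auto simp: px_swap py_swap intro!: continuous_on_compose2[of U f] continuous_intros)
qed

lemma Taylor_remainder_bound:
  fixes r M x :: real
  assumes "n > 0"
    and "\<And>m t. m < n \<Longrightarrow> \<bar>t\<bar> \<le> r \<Longrightarrow> (diff m has_real_derivative diff (Suc m) t) (at t)"
    and bound: "\<And>t. \<bar>t\<bar> \<le> r \<Longrightarrow> \<bar>diff n t\<bar> \<le> M"
    and x: "\<bar>x\<bar> \<le> r"
  shows "\<bar>diff 0 x - (\<Sum>m<n. diff m 0 / fact m * x ^ m)\<bar> \<le> M / fact n * \<bar>x\<bar> ^ n"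
proof (cases "x = 0")
  case True
  then show ?thesis using \<open>n > 0\<close> by (simp add: zero_power)
next
  case False
  obtain t where t: "if x < 0 then x < t \<and> t < 0 else 0 < t \<and> t < x"
    and taylor: "diff 0 x = (\<Sum>m<n. diff m 0 / fact m * (x - 0) ^ m) + diff n t / fact n * (x - 0) ^ n"
    using Taylor[of n diff "diff 0" "-r" r 0 x] assms False by force
  have "\<bar>t\<bar> \<le> r" using t x by (auto split: if_splits)
  have "\<bar>diff 0 x - (\<Sum>m<n. diff m 0 / fact m * x ^ m)\<bar> = \<bar>diff n t\<bar> / fact n * \<bar>x\<bar> ^ n"
    using taylor by (simp add: abs_mult power_abs)
  also have "\<dots> \<le> M / fact n * \<bar>x\<bar> ^ n"
    using bound[OF \<open>\<bar>t\<bar> \<le> r\<close>] by (intro mult_right_mono divide_right_mono) auto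
  finally show ?thesis .
qed

lemma Taylor_bound_1:
  fixes r M x :: real
  assumes "\<And>t. \<bar>t\<bar> \<le> r \<Longrightarrow> (g has_real_derivative g' t) (at t)"
    and "\<And>t. \<bar>t\<bar> \<le> r \<Longrightarrow> \<bar>g' t\<bar> \<le> M"
    and "\<bar>x\<bar> \<le> r"
  shows "\<bar>g x - g 0\<bar> \<le> M * \<bar>x\<bar>"
  using Taylor_remainder_bound[of 1 r "\<lambda>m. if m = 0 then g else g'" M x] assms by simp

lemma Taylor_bound_2:
  fixes r M x :: real
  assumes "\<And>t. \<bar>t\<bar> \<le> r \<Longrightarrow> (g has_real_derivative g' t) (at t)"
    and "\<And>t. \<bar>t\<bar> \<le> r \<Longrightarrow> (g' has_real_derivative g'' t) (at t)"
    and "\<And>t. \<bar>t\<bar> \<le> r \<Longrightarrow> \<bar>g'' t\<bar> \<le> M"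
    and "\<bar>x\<bar> \<le> r"
  shows "\<bar>g x - g 0 - g' 0 * x\<bar> \<le> M / 2 * x\<^sup>2"
  using Taylor_remainder_bound[of 2 r "\<lambda>m. if m = 0 then g else if m = 1 then g' else g''" M x] assms
  by (simp add: less_2_cases_iff numeral_2_eq_2 power2_abs algebra_simps)

lemma Taylor_bound_3:
  fixes r M x :: real
  assumes "\<And>t. \<bar>t\<bar> \<le> r \<Longrightarrow> (g has_real_derivative g' t) (at t)"
    and "\<And>t. \<bar>t\<bar> \<le> r \<Longrightarrow> (g' has_real_derivative g'' t) (at t)"
    and "\<And>t. \<bar>t\<bar> \<le> r \<Longrightarrow> (g'' has_real_derivative g''' t) (at t)"
    and "\<And>t. \<bar>t\<bar> \<le> r \<Longrightarrow> \<bar>g''' t\<bar> \<le> M"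
    and "\<bar>x\<bar> \<le> r"
  shows "\<bar>g x - g 0 - g' 0 * x - g'' 0 / 2 * x\<^sup>2\<bar> \<le> M / 6 * \<bar>x\<bar> ^ 3"
proof -
  have "m < 3 \<Longrightarrow> m = 0 \<or> m = 1 \<or> m = 2" for m :: nat by auto
  then show ?thesis
    using Taylor_remainder_bound[of 3 r
        "\<lambda>m. if m = 0 then g else if m = 1 then g' else if m = 2 then g'' else g'''" M x] assms
    by (auto simp: numeral_3_eq_3 numeral_2_eq_2 fact_numeral algebra_simps)
qed

lemma open_contains_square:
  fixes U :: "(real \<times> real) set"
  assumes "open U" and "(0, 0) \<in> U"
  obtains r where "r > 0" and "\<And>x y. \<bar>x\<bar> \<le> r \<Longrightarrow> \<bar>y\<bar> \<le> r \<Longrightarrow> (x, y) \<in> U"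
proof -
  obtain e where "e > 0" and e: "ball (0, 0) e \<subseteq> U"
    using assms open_contains_ball by blast
  show thesis
  proof (rule that[of "e / 3"])
    fix x y :: real
    assume "\<bar>x\<bar> \<le> e / 3" "\<bar>y\<bar> \<le> e / 3"
    moreover have "norm (x, y) \<le> \<bar>x\<bar> + \<bar>y\<bar>"
      using norm_Pair_le[of x y] by simp
    ultimately have "norm (x, y) < e"
      using \<open>e > 0\<close> by linarith
    then have "(x, y) \<in> ball (0, 0) e"
      by (simp add: dist_norm norm_Pair)
    with e show "(x, y) \<in> U" by blast
  qed (use \<open>e > 0\<close> in simp)
qed

lemma continuous_on_bounded_on_square:
  fixes f :: "real \<times> real \<Rightarrow> real"
  assumes "continuous_on U f" and "\<And>x y. \<bar>x\<bar> \<le> r \<Longrightarrow> \<bar>y\<bar> \<le> r \<Longrightarrow> (x, y) \<in> U"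
  obtains M where "\<And>x y. \<bar>x\<bar> \<le> r \<Longrightarrow> \<bar>y\<bar> \<le> r \<Longrightarrow> \<bar>f (x, y)\<bar> \<le> M"
proof -
  have square: "{-r..r} \<times> {-r..r} \<subseteq> U"
    using assms(2) by (auto simp: abs_le_iff)
  have "compact (f ` ({-r..r} \<times> {-r..r}))"
    by (intro compact_continuous_image continuous_on_subset[OF assms(1) square]
        compact_Times compact_Icc)
  then obtain M where M: "\<forall>p \<in> {-r..r} \<times> {-r..r}. \<bar>f p\<bar> \<le> M"
    using compact_imp_bounded bounded_real by (metis image_eqI)
  show thesis
    by (rule that[of M]) (use M in \<open>auto simp: abs_le_iff\<close>)
qed

lemma bigo_norm1_at_originI:
  assumes "d > 0" and "\<And>x y. \<bar>x\<bar> < d \<Longrightarrow> \<bar>y\<bar> < d \<Longrightarrow> \<bar>f (x, y)\<bar> \<le> K * norm1 (x, y) ^ k"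
  shows "f \<in> O[at (0, 0)](\<lambda>p. norm1 p ^ k)"
proof (rule bigoI)
  show "eventually (\<lambda>p. norm (f p) \<le> K * norm (norm1 p ^ k)) (at (0, 0))"
    using eventually_at_ball[OF \<open>d > 0\<close>, of "(0, 0)" UNIV]
  proof eventually_elim
    case (elim p)
    then have "norm p < d"
      by (simp add: dist_norm zero_prod_def[symmetric])
    then have "\<bar>fst p\<bar> < d" "\<bar>snd p\<bar> < d"
      using norm_fst_le[of "fst p" "snd p"] norm_snd_le[of "snd p" "fst p"] by (auto simp: dist_norm)
    with assms(2)[of "fst p" "snd p"] show ?case by simp
  qed
qed

lemma bigo_norm1_tendsto_0:
  assumes "f \<in> O[at (0, 0)](\<lambda>p. norm1 p ^ k)" and "k > 0"
  shows "(f \<longlongrightarrow> 0) (at (0, 0))"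
proof -
  obtain c where "eventually (\<lambda>p. norm (f p) \<le> c * norm (norm1 p ^ k)) (at (0, 0))"
    using assms(1) by (elim landau_o.bigE)
  moreover have "((\<lambda>p. c * norm (norm1 p ^ k)) \<longlongrightarrow> 0) (at (0, 0))"
  proof -
    have "isCont (\<lambda>p. c * norm (norm1 p ^ k)) (0, 0)" by (intro continuous_intros)
    then show ?thesis using \<open>k > 0\<close> by (simp add: isCont_def zero_power)
  qed
  ultimately show ?thesis by (rule Lim_null_comparison)
qed

lemma bigo_norm1_imp_eq_at_origin:
  assumes "isCont f (0, 0)" and "isCont g (0, 0)"
    and "(\<lambda>p. f p - g p) \<in> O[at (0, 0)](\<lambda>p. norm1 p ^ k)" and "k > 0"
  shows "f (0, 0) = g (0, 0)"
proof -
  have "((\<lambda>p. (f p - g p) + g p) \<longlongrightarrow> 0 + g (0, 0)) (at (0, 0))"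
    using bigo_norm1_tendsto_0[OF assms(3,4)] assms(2) by (intro tendsto_add) (auto simp: isCont_def)
  then have "(f \<longlongrightarrow> g (0, 0)) (at (0, 0))"
    by simp
  with assms(1) show ?thesis
    using tendsto_unique[OF at_neq_bot] by (auto simp: isCont_def)
qed

lemma linear_bigo_norm1: "(\<lambda>p. c1 * fst p + c2 * snd p) \<in> O[F](norm1)"
proof (rule bigoI[where c = "\<bar>c1\<bar> + \<bar>c2\<bar>"], rule always_eventually, rule allI)
  fix p :: "real \<times> real"
  have "\<bar>c1 * fst p + c2 * snd p\<bar> \<le> \<bar>c1\<bar> * \<bar>fst p\<bar> + \<bar>c2\<bar> * \<bar>snd p\<bar>"
    by (metis abs_mult abs_triangle_ineq)
  also have "\<dots> \<le> (\<bar>c1\<bar> + \<bar>c2\<bar>) * norm1 p"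
    by (simp add: algebra_simps)
  finally show "norm (c1 * fst p + c2 * snd p) \<le> (\<bar>c1\<bar> + \<bar>c2\<bar>) * norm (norm1 p)"
    by simp
qed

lemma norm1_power_bigo_mono:
  assumes "j \<le> k"
  shows "(\<lambda>p. norm1 p ^ k) \<in> O[at (0, 0)](\<lambda>p. norm1 p ^ j)"
proof (rule bigoI[where c = 1])
  have "isCont norm1 (0, 0)" by (intro continuous_intros)
  then have "eventually (\<lambda>p. norm1 p < 1) (at (0, 0))"
    by (intro order_tendstoD(2)) (auto simp: isCont_def)
  then show "eventually (\<lambda>p. norm (norm1 p ^ k) \<le> 1 * norm (norm1 p ^ j)) (at (0, 0))"
    by eventually_elim (simp add: power_decreasing assms)
qed

lemma bigo_norm1_compose:
  assumes "f \<in> O[at (0, 0)](\<lambda>p. norm1 p ^ k)"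
    and "filterlim T (at (0, 0)) (at (0, 0))"
    and "\<And>p. norm1 (T p) \<le> c * norm1 p"
  shows "(\<lambda>p. f (T p)) \<in> O[at (0, 0)](\<lambda>p. norm1 p ^ k)"
proof -
  have "(\<lambda>p. f (T p)) \<in> O[at (0, 0)](\<lambda>p. norm1 (T p) ^ k)"
    using landau_o.big.compose[OF assms(1,2)] .
  also have "(\<lambda>p. norm1 (T p) ^ k) \<in> O[at (0, 0)](\<lambda>p. norm1 p ^ k)"
  proof (rule bigoI[where c = "c ^ k"], rule always_eventually, rule allI)
    fix p
    have "norm1 (T p) ^ k \<le> (c * norm1 p) ^ k"
      by (rule power_mono[OF assms(3)]) simp
    then show "norm (norm1 (T p) ^ k) \<le> c ^ k * norm (norm1 p ^ k)"
      by (simp add: power_mult_distrib)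
  qed
  finally show ?thesis .
qed

lemma bigo_norm1_swap:
  assumes "f \<in> O[at (0, 0)](\<lambda>p. norm1 p ^ k)"
  shows "(\<lambda>p. f (prod.swap p)) \<in> O[at (0, 0)](\<lambda>p. norm1 p ^ k)"
proof -
  have swap: "prod.swap = (\<lambda>p :: real \<times> real. (snd p, fst p))"
    by (simp add: fun_eq_iff)
  have "filterlim prod.swap (at (0 :: real, 0 :: real)) (at (0, 0))"
    unfolding filterlim_at swap
    by (auto simp: eventually_at_filter prod_eq_iff intro!: tendsto_eq_intros always_eventually)
  then show ?thesis
    by (rule bigo_norm1_compose[OF assms, where c = 1]) simp
qed

definition rotate :: "real \<Rightarrow> real \<times> real \<Rightarrow> real \<times> real" where
  "rotate \<xi> p = (fst p * cos \<xi> + snd p * sin \<xi>, - fst p * sin \<xi> + snd p * cos \<xi>)"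

lemma filterlim_rotate_at_origin: "filterlim (rotate \<xi>) (at (0, 0)) (at (0, 0))"
proof -
  have "rotate \<xi> (x, y) \<noteq> (0, 0)" if "(x, y) \<noteq> (0, 0)" for x y :: real
  proof
    assume "rotate \<xi> (x, y) = (0, 0)"
    then have "(x * cos \<xi> + y * sin \<xi>)\<^sup>2 + (- x * sin \<xi> + y * cos \<xi>)\<^sup>2 = 0"
      by (simp add: rotate_def)
    also have "(x * cos \<xi> + y * sin \<xi>)\<^sup>2 + (- x * sin \<xi> + y * cos \<xi>)\<^sup>2
        = (x\<^sup>2 + y\<^sup>2) * ((sin \<xi>)\<^sup>2 + (cos \<xi>)\<^sup>2)"
      by algebra
    finally show False
      using that by (simp add: sum_power2_eq_zero_iff)
  qed
  then have "eventually (\<lambda>p. rotate \<xi> p \<in> UNIV \<and> rotate \<xi> p \<noteq> (0, 0)) (at (0, 0))"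
    by (auto simp: eventually_at_filter intro!: always_eventually)
  moreover have "((\<lambda>p. rotate \<xi> p) \<longlongrightarrow> (0, 0)) (at (0, 0))"
    unfolding rotate_def by (auto intro!: tendsto_eq_intros)
  ultimately show ?thesis
    by (simp add: filterlim_at)
qed

lemma norm1_rotate_le: "norm1 (rotate \<xi> p) \<le> 2 * norm1 p"
proof -
  have "\<bar>u * c + v * s\<bar> \<le> \<bar>u\<bar> + \<bar>v\<bar>" if "\<bar>c\<bar> \<le> 1" "\<bar>s\<bar> \<le> 1" for u v c s :: real
  proof -
    have "\<bar>u * c\<bar> \<le> \<bar>u\<bar>" "\<bar>v * s\<bar> \<le> \<bar>v\<bar>"
      using that by (auto simp: abs_mult intro: mult_left_le)
    then show ?thesis by linarith
  qed
  from this[of "cos \<xi>" "sin \<xi>" "fst p" "snd p"] this[of "- sin \<xi>" "cos \<xi>" "fst p" "snd p"]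
  show ?thesis by (simp add: rotate_def)
qed

lemma bigo_norm1_rotate:
  assumes "f \<in> O[at (0, 0)](\<lambda>p. norm1 p ^ k)"
  shows "(\<lambda>p. f (rotate \<xi> p)) \<in> O[at (0, 0)](\<lambda>p. norm1 p ^ k)"
  using assms filterlim_rotate_at_origin norm1_rotate_le by (rule bigo_norm1_compose)

lemma square_bigo_cube_at_0_imp_0:
  fixes c :: real
  assumes "(\<lambda>t. c * t\<^sup>2) \<in> O[at 0](\<lambda>t. \<bar>t\<bar> ^ 3)"
  shows "c = 0"
proof -
  obtain K where "eventually (\<lambda>t. norm (c * t\<^sup>2) \<le> K * norm (\<bar>t\<bar> ^ 3)) (at 0)"
    using assms by (elim landau_o.bigE)
  then have "eventually (\<lambda>t. \<bar>c\<bar> \<le> K * \<bar>t\<bar>) (at (0 :: real))"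
    unfolding eventually_at_filter
  proof (rule eventually_mono, intro impI)
    fix t :: real
    assume "t \<noteq> 0" and "t \<noteq> 0 \<longrightarrow> t \<in> UNIV \<longrightarrow> norm (c * t\<^sup>2) \<le> K * norm (\<bar>t\<bar> ^ 3)"
    then have "\<bar>c\<bar> * t\<^sup>2 \<le> (K * \<bar>t\<bar>) * t\<^sup>2"
      by (simp add: abs_mult power3_eq_cube power2_eq_square algebra_simps)
    with \<open>t \<noteq> 0\<close> show "\<bar>c\<bar> \<le> K * \<bar>t\<bar>" by simp
  qed
  moreover have "((\<lambda>t. K * \<bar>t\<bar>) \<longlongrightarrow> 0) (at (0 :: real))"
    by (auto intro!: tendsto_eq_intros)
  ultimately have "\<bar>c\<bar> \<le> 0"
    by (intro tendsto_le[OF at_neq_bot _ tendsto_const])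
  then show ?thesis by simp
qed

lemma quadratic_form_bigo_cube_imp_0:
  assumes "(\<lambda>p. \<alpha> * (fst p)\<^sup>2 + \<beta> * fst p * snd p + \<gamma> * (snd p)\<^sup>2) \<in> O[at (0, 0)](\<lambda>p. norm1 p ^ 3)"
  shows "\<alpha> = 0 \<and> \<beta> = 0 \<and> \<gamma> = 0"
proof -
  define Q where "Q u v = \<alpha> * u\<^sup>2 + \<beta> * u * v + \<gamma> * v\<^sup>2" for u v
  have "Q u v = 0" for u v
  proof (cases "(u, v) = (0, 0)")
    case False
    have "filterlim (\<lambda>t. (t * u, t * v)) (at (0, 0)) (at 0)"
      unfolding filterlim_at using False
      by (auto simp: eventually_at_filter intro!: tendsto_eq_intros always_eventually)
    have "(\<lambda>t. \<alpha> * (t * u)\<^sup>2 + \<beta> * (t * u) * (t * v) + \<gamma> * (t * v)\<^sup>2) = (\<lambda>t. Q u v * t\<^sup>2)"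
      by (simp add: fun_eq_iff Q_def power2_eq_square algebra_simps)
    moreover have "(\<lambda>t. norm1 (t * u, t * v) ^ 3) = (\<lambda>t. norm1 (u, v) ^ 3 * \<bar>t\<bar> ^ 3)"
      by (simp add: fun_eq_iff abs_mult power_mult_distrib flip: distrib_left)
    ultimately have "(\<lambda>t. Q u v * t\<^sup>2) \<in> O[at 0](\<lambda>t. norm1 (u, v) ^ 3 * \<bar>t\<bar> ^ 3)"
      using landau_o.big.compose[OF assms \<open>filterlim _ _ _\<close>] by (simp only: fst_conv snd_conv)
    moreover have "norm1 (u, v) \<noteq> 0"
      using False by auto
    ultimately show ?thesis
      by (intro square_bigo_cube_at_0_imp_0) simp
  qed (simp add: Q_def)
  from this[of 1 0] this[of 0 1] this[of 1 1] show ?thesis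
    by (simp add: Q_def)
qed

lemma square_of_linear_expansion:
  assumes "(\<lambda>p. P p - (c1 * fst p + c2 * snd p)) \<in> O[at (0, 0)](\<lambda>p. norm1 p ^ 2)"
  shows "(\<lambda>p. (P p)\<^sup>2 - (c1 * fst p + c2 * snd p)\<^sup>2) \<in> O[at (0, 0)](\<lambda>p. norm1 p ^ 3)"
proof -
  let ?L = "\<lambda>p. c1 * fst p + c2 * snd p"
  have "(\<lambda>p. norm1 p ^ 2) \<in> O[at (0, 0)](\<lambda>p. norm1 p ^ 1)"
    by (rule norm1_power_bigo_mono) simp
  with assms have "(\<lambda>p. P p - ?L p) \<in> O[at (0, 0)](norm1)"
    by (simp add: landau_o.big_trans)
  moreover have "(\<lambda>p. 2 * ?L p) \<in> O[at (0, 0)](norm1)"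
    by (simp only: cmult_in_bigo_iff linear_bigo_norm1 simp_thms)
  ultimately have "(\<lambda>p. (P p - ?L p) + 2 * ?L p) \<in> O[at (0, 0)](norm1)"
    by (rule sum_in_bigo)
  with assms have "(\<lambda>p. (P p - ?L p) * ((P p - ?L p) + 2 * ?L p)) \<in> O[at (0, 0)](\<lambda>p. norm1 p ^ 2 * norm1 p)"
    by (rule landau_o.big.mult)
  moreover have "(\<lambda>p. norm1 p ^ 2 * norm1 p) = (\<lambda>p. norm1 p ^ 3)"
    by (simp add: fun_eq_iff power3_eq_cube power2_eq_square)
  moreover have "(\<lambda>p. (P p - ?L p) * ((P p - ?L p) + 2 * ?L p)) = (\<lambda>p. (P p)\<^sup>2 - (?L p)\<^sup>2)"
    by (simp add: fun_eq_iff power2_eq_square algebra_simps)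
  ultimately show ?thesis by simp
qed

lemma sum_squares_of_linear_expansions:
  assumes "(\<lambda>p. P p - (A1 * fst p + A2 * snd p)) \<in> O[at (0, 0)](\<lambda>p. norm1 p ^ 2)"
    and "(\<lambda>p. Q p - (B1 * fst p + B2 * snd p)) \<in> O[at (0, 0)](\<lambda>p. norm1 p ^ 2)"
    and "(\<lambda>p. (P p)\<^sup>2 + (Q p)\<^sup>2 - (a\<^sup>2 * (fst p)\<^sup>2 + b\<^sup>2 * (snd p)\<^sup>2)) \<in> O[at (0, 0)](\<lambda>p. norm1 p ^ 3)"
  shows "A1\<^sup>2 + B1\<^sup>2 = a\<^sup>2 \<and> A1 * A2 + B1 * B2 = 0 \<and> A2\<^sup>2 + B2\<^sup>2 = b\<^sup>2"
proof -
  have "(\<lambda>p. ((P p)\<^sup>2 + (Q p)\<^sup>2 - (a\<^sup>2 * (fst p)\<^sup>2 + b\<^sup>2 * (snd p)\<^sup>2))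
            - ((P p)\<^sup>2 - (A1 * fst p + A2 * snd p)\<^sup>2) - ((Q p)\<^sup>2 - (B1 * fst p + B2 * snd p)\<^sup>2))
          \<in> O[at (0, 0)](\<lambda>p. norm1 p ^ 3)"
    using sum_in_bigo(2)[OF sum_in_bigo(2)[OF assms(3) square_of_linear_expansion[OF assms(1)]]
        square_of_linear_expansion[OF assms(2)]] .
  also have "(\<lambda>p. ((P p)\<^sup>2 + (Q p)\<^sup>2 - (a\<^sup>2 * (fst p)\<^sup>2 + b\<^sup>2 * (snd p)\<^sup>2))
            - ((P p)\<^sup>2 - (A1 * fst p + A2 * snd p)\<^sup>2) - ((Q p)\<^sup>2 - (B1 * fst p + B2 * snd p)\<^sup>2))
      = (\<lambda>p. (A1\<^sup>2 + B1\<^sup>2 - a\<^sup>2) * (fst p)\<^sup>2 + (2 * (A1 * A2 + B1 * B2)) * fst p * snd p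
            + (A2\<^sup>2 + B2\<^sup>2 - b\<^sup>2) * (snd p)\<^sup>2)"
    by (simp add: fun_eq_iff power2_eq_square algebra_simps)
  finally show ?thesis
    by (auto dest: quadratic_form_bigo_cube_imp_0)
qed

lemma first_order_Taylor_estimate:
  assumes C: "Ck_on 2 F U" and square: "\<And>x y. \<bar>x\<bar> \<le> r \<Longrightarrow> \<bar>y\<bar> \<le> r \<Longrightarrow> (x, y) \<in> U"
    and M: "\<And>x y. \<bar>x\<bar> \<le> r \<Longrightarrow> \<bar>y\<bar> \<le> r \<Longrightarrow>
      \<bar>px (px F) (x, y)\<bar> \<le> M \<and> \<bar>py (py F) (x, y)\<bar> \<le> M \<and> \<bar>px (py F) (x, y)\<bar> \<le> M"
    and x: "\<bar>x\<bar> \<le> r" and y: "\<bar>y\<bar> \<le> r"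
  shows "\<bar>F (x, y) - (F (0, 0) + px F (0, 0) * x + py F (0, 0) * y)\<bar> \<le> M * (\<bar>x\<bar> + \<bar>y\<bar>)\<^sup>2"
proof -
  have C2: "Ck_on (Suc (Suc 0)) F U"
    using C by (simp add: numeral_2_eq_2)
  then have Cx: "Ck_on (Suc 0) (px F) U" and Cy: "Ck_on (Suc 0) (py F) U"
    by auto
  have "0 \<le> r"
    using x by linarith
  then have "M \<ge> 0"
    using M[of 0 0] by force
  have along_x: "\<bar>F (x, 0) - F (0, 0) - px F (0, 0) * x\<bar> \<le> M / 2 * x\<^sup>2"
    by (rule Taylor_bound_2[where g' = "\<lambda>t. px F (t, 0)" and g'' = "\<lambda>t. px (px F) (t, 0)"])
      (use x \<open>0 \<le> r\<close> M in \<open>auto intro!: Ck_on_Suc_has_px[OF C2] Ck_on_Suc_has_px[OF Cx] square\<close>)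
  have along_y: "\<bar>F (x, y) - F (x, 0) - py F (x, 0) * y\<bar> \<le> M / 2 * y\<^sup>2"
    by (rule Taylor_bound_2[where g = "\<lambda>t. F (x, t)" and g' = "\<lambda>t. py F (x, t)"
          and g'' = "\<lambda>t. py (py F) (x, t)"])
      (use x y M in \<open>auto intro!: Ck_on_Suc_has_py[OF C2] Ck_on_Suc_has_py[OF Cy] square\<close>)
  have "\<bar>py F (x, 0) - py F (0, 0)\<bar> \<le> M * \<bar>x\<bar>"
    by (rule Taylor_bound_1[where g' = "\<lambda>t. px (py F) (t, 0)"])
      (use x \<open>0 \<le> r\<close> M in \<open>auto intro!: Ck_on_Suc_has_px[OF Cy] square\<close>)
  then have mixed: "\<bar>(py F (x, 0) - py F (0, 0)) * y\<bar> \<le> M * \<bar>x\<bar> * \<bar>y\<bar>"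
    by (simp add: abs_mult mult_right_mono)
  have "F (x, y) - (F (0, 0) + px F (0, 0) * x + py F (0, 0) * y)
      = (F (x, 0) - F (0, 0) - px F (0, 0) * x) + (F (x, y) - F (x, 0) - py F (x, 0) * y)
        + (py F (x, 0) - py F (0, 0)) * y"
    by (simp add: algebra_simps)
  then have "\<bar>F (x, y) - (F (0, 0) + px F (0, 0) * x + py F (0, 0) * y)\<bar>
      \<le> M / 2 * x\<^sup>2 + M / 2 * y\<^sup>2 + M * \<bar>x\<bar> * \<bar>y\<bar>"
    using along_x along_y mixed by linarith
  also have "\<dots> \<le> M * (\<bar>x\<bar> + \<bar>y\<bar>)\<^sup>2"
  proof -
    have "M * (\<bar>x\<bar> + \<bar>y\<bar>)\<^sup>2 = M * x\<^sup>2 + M * y\<^sup>2 + 2 * (M * \<bar>x\<bar> * \<bar>y\<bar>)"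
      by (simp add: power2_sum power2_abs algebra_simps)
    moreover have "0 \<le> M * x\<^sup>2" "0 \<le> M * y\<^sup>2" "0 \<le> M * \<bar>x\<bar> * \<bar>y\<bar>"
      using \<open>M \<ge> 0\<close> by simp_all
    ultimately show ?thesis by linarith
  qed
  finally show ?thesis .
qed

lemma first_order_expansion_at_origin:
  assumes C: "Ck_on 2 F U" and "open U" and "(0, 0) \<in> U"
  shows "(\<lambda>p. F p - (F (0, 0) + px F (0, 0) * fst p + py F (0, 0) * snd p))
           \<in> O[at (0, 0)](\<lambda>p. norm1 p ^ 2)"
proof -
  obtain r where "r > 0" and square: "\<And>x y. \<bar>x\<bar> \<le> r \<Longrightarrow> \<bar>y\<bar> \<le> r \<Longrightarrow> (x, y) \<in> U"
    using open_contains_square[OF assms(2,3)] by blast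
  have "continuous_on U (\<lambda>p. \<bar>px (px F) p\<bar> + \<bar>py (py F) p\<bar> + \<bar>px (py F) p\<bar>)"
    using C by (auto simp: numeral_2_eq_2 intro!: continuous_intros)
  then obtain M where M: "\<And>x y. \<bar>x\<bar> \<le> r \<Longrightarrow> \<bar>y\<bar> \<le> r \<Longrightarrow>
      \<bar>\<bar>px (px F) (x, y)\<bar> + \<bar>py (py F) (x, y)\<bar> + \<bar>px (py F) (x, y)\<bar>\<bar> \<le> M"
    by (rule continuous_on_bounded_on_square[OF _ square]) auto
  show ?thesis
  proof (rule bigo_norm1_at_originI[OF \<open>r > 0\<close>, where K = M])
    fix x y :: real
    assume "\<bar>x\<bar> < r" "\<bar>y\<bar> < r"
    have "\<bar>F (x, y) - (F (0, 0) + px F (0, 0) * x + py F (0, 0) * y)\<bar> \<le> M * (\<bar>x\<bar> + \<bar>y\<bar>)\<^sup>2"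
    proof (rule first_order_Taylor_estimate[OF C square])
      fix u v :: real
      assume "\<bar>u\<bar> \<le> r" "\<bar>v\<bar> \<le> r"
      from M[OF this] show "\<bar>px (px F) (u, v)\<bar> \<le> M \<and> \<bar>py (py F) (u, v)\<bar> \<le> M \<and> \<bar>px (py F) (u, v)\<bar> \<le> M"
        by auto
    qed (use \<open>\<bar>x\<bar> < r\<close> \<open>\<bar>y\<bar> < r\<close> in auto)
    then show "\<bar>F (x, y) - (F (0, 0) + px F (0, 0) * fst (x, y) + py F (0, 0) * snd (x, y))\<bar>
        \<le> M * norm1 (x, y) ^ 2"
      by simp
  qed
qed

lemma second_order_Taylor_estimate:
  assumes C: "Ck_on 3 F U" and square: "\<And>x y. \<bar>x\<bar> \<le> r \<Longrightarrow> \<bar>y\<bar> \<le> r \<Longrightarrow> (x, y) \<in> U"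
    and M: "\<And>x y. \<bar>x\<bar> \<le> r \<Longrightarrow> \<bar>y\<bar> \<le> r \<Longrightarrow>
      \<bar>px (px (px F)) (x, y)\<bar> \<le> M \<and> \<bar>py (py (py F)) (x, y)\<bar> \<le> M
      \<and> \<bar>px (px (py F)) (x, y)\<bar> \<le> M \<and> \<bar>px (py (py F)) (x, y)\<bar> \<le> M"
    and x: "\<bar>x\<bar> \<le> r" and y: "\<bar>y\<bar> \<le> r"
  shows "\<bar>F (x, y) - (F (0, 0) + px F (0, 0) * x + py F (0, 0) * y
      + px (px F) (0, 0) / 2 * x\<^sup>2 + px (py F) (0, 0) * x * y + py (py F) (0, 0) / 2 * y\<^sup>2)\<bar>
    \<le> M * (\<bar>x\<bar> + \<bar>y\<bar>) ^ 3"
proof -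
  have C3: "Ck_on (Suc (Suc (Suc 0))) F U"
    using C by (simp add: numeral_3_eq_3)
  then have Cx: "Ck_on (Suc (Suc 0)) (px F) U" and Cy: "Ck_on (Suc (Suc 0)) (py F) U"
    by auto
  then have Cxx: "Ck_on (Suc 0) (px (px F)) U" and Cxy: "Ck_on (Suc 0) (px (py F)) U"
    and Cyy: "Ck_on (Suc 0) (py (py F)) U"
    by auto
  have "0 \<le> r"
    using x by linarith
  then have "M \<ge> 0"
    using M[of 0 0] by force
  have along_x: "\<bar>F (x, 0) - F (0, 0) - px F (0, 0) * x - px (px F) (0, 0) / 2 * x\<^sup>2\<bar>
      \<le> M / 6 * \<bar>x\<bar> ^ 3"
    by (rule Taylor_bound_3[where g' = "\<lambda>t. px F (t, 0)" and g'' = "\<lambda>t. px (px F) (t, 0)"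
          and g''' = "\<lambda>t. px (px (px F)) (t, 0)"])
      (use x \<open>0 \<le> r\<close> M in \<open>auto intro!: Ck_on_Suc_has_px[OF C3] Ck_on_Suc_has_px[OF Cx]
          Ck_on_Suc_has_px[OF Cxx] square\<close>)
  have along_y: "\<bar>F (x, y) - F (x, 0) - py F (x, 0) * y - py (py F) (x, 0) / 2 * y\<^sup>2\<bar>
      \<le> M / 6 * \<bar>y\<bar> ^ 3"
    by (rule Taylor_bound_3[where g = "\<lambda>t. F (x, t)" and g' = "\<lambda>t. py F (x, t)"
          and g'' = "\<lambda>t. py (py F) (x, t)" and g''' = "\<lambda>t. py (py (py F)) (x, t)"])
      (use x y M in \<open>auto intro!: Ck_on_Suc_has_py[OF C3] Ck_on_Suc_has_py[OF Cy]
          Ck_on_Suc_has_py[OF Cyy] square\<close>)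
  have "\<bar>py F (x, 0) - py F (0, 0) - px (py F) (0, 0) * x\<bar> \<le> M / 2 * x\<^sup>2"
    by (rule Taylor_bound_2[where g' = "\<lambda>t. px (py F) (t, 0)" and g'' = "\<lambda>t. px (px (py F)) (t, 0)"])
      (use x \<open>0 \<le> r\<close> M in \<open>auto intro!: Ck_on_Suc_has_px[OF Cy] Ck_on_Suc_has_px[OF Cxy] square\<close>)
  then have mixed_y: "\<bar>(py F (x, 0) - py F (0, 0) - px (py F) (0, 0) * x) * y\<bar> \<le> M / 2 * x\<^sup>2 * \<bar>y\<bar>"
    unfolding abs_mult by (rule mult_right_mono) simp_all
  have "\<bar>py (py F) (x, 0) - py (py F) (0, 0)\<bar> \<le> M * \<bar>x\<bar>"
    by (rule Taylor_bound_1[where g' = "\<lambda>t. px (py (py F)) (t, 0)"])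
      (use x \<open>0 \<le> r\<close> M in \<open>auto intro!: Ck_on_Suc_has_px[OF Cyy] square\<close>)
  then have mixed_yy: "\<bar>(py (py F) (x, 0) - py (py F) (0, 0)) / 2 * y\<^sup>2\<bar> \<le> M / 2 * \<bar>x\<bar> * y\<^sup>2"
    by (simp add: abs_mult mult_right_mono)
  have "F (x, y) - (F (0, 0) + px F (0, 0) * x + py F (0, 0) * y
        + px (px F) (0, 0) / 2 * x\<^sup>2 + px (py F) (0, 0) * x * y + py (py F) (0, 0) / 2 * y\<^sup>2)
      = (F (x, 0) - F (0, 0) - px F (0, 0) * x - px (px F) (0, 0) / 2 * x\<^sup>2)
        + (F (x, y) - F (x, 0) - py F (x, 0) * y - py (py F) (x, 0) / 2 * y\<^sup>2)
        + (py F (x, 0) - py F (0, 0) - px (py F) (0, 0) * x) * y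
        + (py (py F) (x, 0) - py (py F) (0, 0)) / 2 * y\<^sup>2"
    by (simp add: field_simps)
  then have "\<bar>F (x, y) - (F (0, 0) + px F (0, 0) * x + py F (0, 0) * y
        + px (px F) (0, 0) / 2 * x\<^sup>2 + px (py F) (0, 0) * x * y + py (py F) (0, 0) / 2 * y\<^sup>2)\<bar>
      \<le> M / 6 * \<bar>x\<bar> ^ 3 + M / 6 * \<bar>y\<bar> ^ 3 + M / 2 * x\<^sup>2 * \<bar>y\<bar> + M / 2 * \<bar>x\<bar> * y\<^sup>2"
    using along_x along_y mixed_y mixed_yy by linarith
  also have "\<dots> \<le> M * (\<bar>x\<bar> + \<bar>y\<bar>) ^ 3"
  proof -
    have cube: "M * (u + v) ^ 3 = M * u ^ 3 + M * v ^ 3 + 3 * (M * u\<^sup>2 * v) + 3 * (M * u * v\<^sup>2)"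
      for u v :: real
      by (simp add: power3_eq_cube power2_eq_square algebra_simps)
    have "M * (\<bar>x\<bar> + \<bar>y\<bar>) ^ 3
        = M * \<bar>x\<bar> ^ 3 + M * \<bar>y\<bar> ^ 3 + 3 * (M * x\<^sup>2 * \<bar>y\<bar>) + 3 * (M * \<bar>x\<bar> * y\<^sup>2)"
      using cube[of "\<bar>x\<bar>" "\<bar>y\<bar>"] by (simp only: power2_abs)
    moreover have "0 \<le> M * \<bar>x\<bar> ^ 3" "0 \<le> M * \<bar>y\<bar> ^ 3" "0 \<le> M * x\<^sup>2 * \<bar>y\<bar>" "0 \<le> M * \<bar>x\<bar> * y\<^sup>2"
      using \<open>M \<ge> 0\<close> by simp_all
    ultimately show ?thesis by linarith
  qed
  finally show ?thesis .
qed

lemma second_order_expansion_at_origin: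
  assumes C: "Ck_on 3 F U" and "open U" and "(0, 0) \<in> U"
  shows "(\<lambda>p. F p - (F (0, 0) + px F (0, 0) * fst p + py F (0, 0) * snd p
            + px (px F) (0, 0) / 2 * (fst p)\<^sup>2 + px (py F) (0, 0) * fst p * snd p
            + py (py F) (0, 0) / 2 * (snd p)\<^sup>2))
           \<in> O[at (0, 0)](\<lambda>p. norm1 p ^ 3)"
proof -
  obtain r where "r > 0" and square: "\<And>x y. \<bar>x\<bar> \<le> r \<Longrightarrow> \<bar>y\<bar> \<le> r \<Longrightarrow> (x, y) \<in> U"
    using open_contains_square[OF assms(2,3)] by blast
  have "continuous_on U (\<lambda>p. \<bar>px (px (px F)) p\<bar> + \<bar>py (py (py F)) p\<bar>
      + \<bar>px (px (py F)) p\<bar> + \<bar>px (py (py F)) p\<bar>)"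
    using C by (auto simp: numeral_3_eq_3 intro!: continuous_intros)
  then obtain M where M: "\<And>x y. \<bar>x\<bar> \<le> r \<Longrightarrow> \<bar>y\<bar> \<le> r \<Longrightarrow>
      \<bar>\<bar>px (px (px F)) (x, y)\<bar> + \<bar>py (py (py F)) (x, y)\<bar>
       + \<bar>px (px (py F)) (x, y)\<bar> + \<bar>px (py (py F)) (x, y)\<bar>\<bar> \<le> M"
    by (rule continuous_on_bounded_on_square[OF _ square]) auto
  show ?thesis
  proof (rule bigo_norm1_at_originI[OF \<open>r > 0\<close>, where K = M])
    fix x y :: real
    assume "\<bar>x\<bar> < r" "\<bar>y\<bar> < r"
    have "\<bar>F (x, y) - (F (0, 0) + px F (0, 0) * x + py F (0, 0) * y
        + px (px F) (0, 0) / 2 * x\<^sup>2 + px (py F) (0, 0) * x * y + py (py F) (0, 0) / 2 * y\<^sup>2)\<bar>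
      \<le> M * (\<bar>x\<bar> + \<bar>y\<bar>) ^ 3"
    proof (rule second_order_Taylor_estimate[OF C square])
      fix u v :: real
      assume "\<bar>u\<bar> \<le> r" "\<bar>v\<bar> \<le> r"
      from M[OF this] show "\<bar>px (px (px F)) (u, v)\<bar> \<le> M \<and> \<bar>py (py (py F)) (u, v)\<bar> \<le> M
          \<and> \<bar>px (px (py F)) (u, v)\<bar> \<le> M \<and> \<bar>px (py (py F)) (u, v)\<bar> \<le> M"
        by auto
    qed (use \<open>\<bar>x\<bar> < r\<close> \<open>\<bar>y\<bar> < r\<close> in auto)
    then show "\<bar>F (x, y) - (F (0, 0) + px F (0, 0) * fst (x, y) + py F (0, 0) * snd (x, y)
          + px (px F) (0, 0) / 2 * (fst (x, y))\<^sup>2 + px (py F) (0, 0) * fst (x, y) * snd (x, y)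
          + py (py F) (0, 0) / 2 * (snd (x, y))\<^sup>2)\<bar>
        \<le> M * norm1 (x, y) ^ 3"
      by simp
  qed
qed

lemma mixed_partials_eq_at_origin:
  assumes "Ck_on 3 F U" and "open U" and "(0, 0) \<in> U"
  shows "py (px F) (0, 0) = px (py F) (0, 0)"
proof -
  have "open (prod.swap -` U)"
    by (rule continuous_open_vimage[OF assms(2)]) (intro continuous_intros)
  from second_order_expansion_at_origin[OF Ck_on_swap[OF assms(1)] this] assms(3)
  have "(\<lambda>p. F (prod.swap p) - (F (0, 0) + py F (0, 0) * fst p + px F (0, 0) * snd p
            + py (py F) (0, 0) / 2 * (fst p)\<^sup>2 + py (px F) (0, 0) * fst p * snd p
            + px (px F) (0, 0) / 2 * (snd p)\<^sup>2))
           \<in> O[at (0, 0)](\<lambda>p. norm1 p ^ 3)"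
    by (simp add: px_swap py_swap)
  from bigo_norm1_swap[OF this]
  have "(\<lambda>p. F p - (F (0, 0) + py F (0, 0) * snd p + px F (0, 0) * fst p
            + py (py F) (0, 0) / 2 * (snd p)\<^sup>2 + py (px F) (0, 0) * snd p * fst p
            + px (px F) (0, 0) / 2 * (fst p)\<^sup>2))
           \<in> O[at (0, 0)](\<lambda>p. norm1 p ^ 3)"
    by simp
  from sum_in_bigo(2)[OF this second_order_expansion_at_origin[OF assms]]
  have "(\<lambda>p. 0 * (fst p)\<^sup>2 + (px (py F) (0, 0) - py (px F) (0, 0)) * fst p * snd p + 0 * (snd p)\<^sup>2)
          \<in> O[at (0, 0)](\<lambda>p. norm1 p ^ 3)"
    by (simp add: algebra_simps)
  from quadratic_form_bigo_cube_imp_0[OF this] show ?thesis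
    by simp
qed

lemma eikonal_second_order_jet:
  fixes h z :: "real \<times> real \<Rightarrow> real"
  assumes "open U" and "(0, 0) \<in> U" and "continuous_on U h"
    and h: "(\<lambda>p. h p - (a\<^sup>2 * (fst p)\<^sup>2 + b\<^sup>2 * (snd p)\<^sup>2)) \<in> O[at (0, 0)](\<lambda>p. norm1 p ^ 3)"
    and z: "Ck_on 3 z U" and eikonal: "\<forall>p\<in>U. (px z p)\<^sup>2 + (py z p)\<^sup>2 = h p"
    and "z (0, 0) = 0"
  obtains A B C where "A\<^sup>2 + B\<^sup>2 = a\<^sup>2" and "A * B + B * C = 0" and "B\<^sup>2 + C\<^sup>2 = b\<^sup>2"
    and "(\<lambda>p. z p - (A / 2 * (fst p)\<^sup>2 + B * fst p * snd p + C / 2 * (snd p)\<^sup>2))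
           \<in> O[at (0, 0)](\<lambda>p. norm1 p ^ 3)"
proof -
  have "isCont h (0, 0)"
    using assms(1-3) continuous_on_eq_continuous_at by blast
  moreover have "isCont (\<lambda>p. a\<^sup>2 * (fst p)\<^sup>2 + b\<^sup>2 * (snd p)\<^sup>2) (0, 0)"
    by (intro continuous_intros)
  ultimately have "h (0, 0) = 0"
    using bigo_norm1_imp_eq_at_origin[OF _ _ h] by simp
  then have grad: "px z (0, 0) = 0" "py z (0, 0) = 0"
    using eikonal assms(2) by (auto simp: sum_power2_eq_zero_iff)
  define A B C where "A = px (px z) (0, 0)" and "B = px (py z) (0, 0)" and "C = py (py z) (0, 0)"
  have "py (px z) (0, 0) = B"
    using mixed_partials_eq_at_origin[OF z assms(1,2)] by (simp add: B_def)
  have Cpx: "Ck_on 2 (px z) U" and Cpy: "Ck_on 2 (py z) U"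
    using z by (simp_all add: numeral_3_eq_3 numeral_2_eq_2)
  have "(\<lambda>p. px z p - (A * fst p + B * snd p)) \<in> O[at (0, 0)](\<lambda>p. norm1 p ^ 2)"
    using first_order_expansion_at_origin[OF Cpx assms(1,2)] \<open>py (px z) (0, 0) = B\<close>
    by (simp add: grad A_def)
  moreover have "(\<lambda>p. py z p - (B * fst p + C * snd p)) \<in> O[at (0, 0)](\<lambda>p. norm1 p ^ 2)"
    using first_order_expansion_at_origin[OF Cpy assms(1,2)]
    by (simp add: grad B_def C_def)
  moreover have "(\<lambda>p. (px z p)\<^sup>2 + (py z p)\<^sup>2 - (a\<^sup>2 * (fst p)\<^sup>2 + b\<^sup>2 * (snd p)\<^sup>2))
      \<in> O[at (0, 0)](\<lambda>p. norm1 p ^ 3)"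
  proof -
    have "eventually (\<lambda>p. p \<in> U) (at (0, 0))"
      by (rule eventually_at_in_open'[OF assms(1,2)])
    then have "eventually (\<lambda>p. h p - (a\<^sup>2 * (fst p)\<^sup>2 + b\<^sup>2 * (snd p)\<^sup>2)
        = (px z p)\<^sup>2 + (py z p)\<^sup>2 - (a\<^sup>2 * (fst p)\<^sup>2 + b\<^sup>2 * (snd p)\<^sup>2)) (at (0, 0))"
      by eventually_elim (simp add: eikonal)
    then show ?thesis
      using h by (rule landau_o.big.in_cong[THEN iffD1])
  qed
  ultimately have "A\<^sup>2 + B\<^sup>2 = a\<^sup>2 \<and> A * B + B * C = 0 \<and> B\<^sup>2 + C\<^sup>2 = b\<^sup>2"
    by (rule sum_squares_of_linear_expansions)
  moreover have "(\<lambda>p. z p - (A / 2 * (fst p)\<^sup>2 + B * fst p * snd p + C / 2 * (snd p)\<^sup>2))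
      \<in> O[at (0, 0)](\<lambda>p. norm1 p ^ 3)"
    using second_order_expansion_at_origin[OF z assms(1,2)] \<open>z (0, 0) = 0\<close>
    by (simp add: grad A_def B_def C_def)
  ultimately show thesis
    using that by blast
qed

lemma rotate_traceless_quadratic_form:
  fixes A B a :: real
  assumes "A\<^sup>2 + B\<^sup>2 = a\<^sup>2" and "a > 0"
  obtains \<xi> where "\<And>p. A / 2 * (fst (rotate \<xi> p))\<^sup>2 + B * fst (rotate \<xi> p) * snd (rotate \<xi> p)
      - A / 2 * (snd (rotate \<xi> p))\<^sup>2 = a / 2 * (fst p)\<^sup>2 - a / 2 * (snd p)\<^sup>2"
proof -
  have "(A / a)\<^sup>2 + (B / a)\<^sup>2 = 1"
    using assms by (simp add: power_divide field_simps)
  then obtain \<phi> where "A / a = cos \<phi>" and "B / a = sin \<phi>"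
    by (rule sincos_total_2pi) blast
  define \<xi> where "\<xi> = - \<phi> / 2"
  have "\<phi> = - (2 * \<xi>)"
    by (simp add: \<xi>_def)
  then have A: "A = a * ((cos \<xi>)\<^sup>2 - (sin \<xi>)\<^sup>2)" and B: "B = - (2 * a * sin \<xi> * cos \<xi>)"
    using \<open>A / a = cos \<phi>\<close> \<open>B / a = sin \<phi>\<close> \<open>a > 0\<close>
    by (simp_all add: cos_double sin_double divide_eq_eq mult.assoc)
  show thesis
  proof (rule that[of \<xi>])
    fix p :: "real \<times> real"
    have ident: "a * (c\<^sup>2 - s\<^sup>2) / 2 * (x * c + y * s)\<^sup>2
        + - (2 * a * s * c) * (x * c + y * s) * (- x * s + y * c)
        - a * (c\<^sup>2 - s\<^sup>2) / 2 * (- x * s + y * c)\<^sup>2 = a / 2 * (x\<^sup>2 - y\<^sup>2) * (c\<^sup>2 + s\<^sup>2)\<^sup>2"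
      for c s x y :: real
      by (simp add: field_simps power2_eq_square)
    show "A / 2 * (fst (rotate \<xi> p))\<^sup>2 + B * fst (rotate \<xi> p) * snd (rotate \<xi> p)
        - A / 2 * (snd (rotate \<xi> p))\<^sup>2 = a / 2 * (fst p)\<^sup>2 - a / 2 * (snd p)\<^sup>2"
      unfolding A B rotate_def fst_conv snd_conv ident by (simp add: algebra_simps)
  qed
qed

lemma eikonal_hessian_cases:
  fixes A B C a b :: real
  assumes "A\<^sup>2 + B\<^sup>2 = a\<^sup>2" and "A * B + B * C = 0" and "B\<^sup>2 + C\<^sup>2 = b\<^sup>2" and "a > 0" and "b > 0"
  shows "B = 0 \<and> A / a \<in> {-1, 1} \<and> C / b \<in> {-1, 1} \<or> C = - A \<and> a = b"
proof (cases "B = 0")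
  case True
  then show ?thesis
    using assms by (auto simp: power2_eq_iff)
next
  case False
  have "B * (A + C) = 0"
    using assms(2) by (simp add: algebra_simps)
  with False have "C = - A"
    by simp
  with assms(1,3) have "a\<^sup>2 = b\<^sup>2"
    by simp
  with \<open>C = - A\<close> assms(4,5) show ?thesis
    by (simp add: power2_eq_iff_nonneg)
qed

theorem proposition4p1:
  fixes h z :: "real \<times> real \<Rightarrow> real" and a b :: real and U :: "(real \<times> real) set"
  assumes "open U" and "(0, 0) \<in> U"
    and "smooth_on h U"
    and "a > 0" and "b > 0"
    and "(\<lambda>p. h p - (a\<^sup>2 * (fst p)\<^sup>2 + b\<^sup>2 * (snd p)\<^sup>2))
           \<in> O[at (0, 0)](\<lambda>p. (\<bar>fst p\<bar> + \<bar>snd p\<bar>) ^ 3)"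
    and "Ck_on 3 z U"
    and "\<forall>p\<in>U. (px z p)\<^sup>2 + (py z p)\<^sup>2 = h p"
    and "z (0, 0) = 0"
  shows "(a \<noteq> b \<longrightarrow>
           (\<exists>s1 s2 :: real. s1 \<in> {-1, 1} \<and> s2 \<in> {-1, 1} \<and>
              (\<lambda>p. z p - (s1 * a * (fst p)\<^sup>2 + s2 * b * (snd p)\<^sup>2) / 2)
                \<in> O[at (0, 0)](\<lambda>p. (\<bar>fst p\<bar> + \<bar>snd p\<bar>) ^ 3)))
       \<and> (a = b \<longrightarrow>
           (\<exists>\<xi> s1 s2 :: real. s1 \<in> {-1, 1} \<and> s2 \<in> {-1, 1} \<and>
              (\<lambda>p. z (fst p * cos \<xi> + snd p * sin \<xi>, - fst p * sin \<xi> + snd p * cos \<xi>)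
                     - (s1 * a * (fst p)\<^sup>2 + s2 * b * (snd p)\<^sup>2) / 2)
                \<in> O[at (0, 0)](\<lambda>p. (\<bar>fst p\<bar> + \<bar>snd p\<bar>) ^ 3)))"
proof -
  have "continuous_on U h"
    using assms(3) Ck_on_imp_continuous_on by (auto simp: smooth_on_def)
  then obtain A B C where circle: "A\<^sup>2 + B\<^sup>2 = a\<^sup>2" and "A * B + B * C = 0" and "B\<^sup>2 + C\<^sup>2 = b\<^sup>2"
    and jet: "(\<lambda>p. z p - (A / 2 * (fst p)\<^sup>2 + B * fst p * snd p + C / 2 * (snd p)\<^sup>2))
      \<in> O[at (0, 0)](\<lambda>p. norm1 p ^ 3)"
    using eikonal_second_order_jet[OF assms(1,2) _ assms(6-9)] by blast
  from eikonal_hessian_cases[OF this(1-3) assms(4,5)] show ?thesis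
  proof (elim disjE conjE)
    assume "B = 0" and signs: "A / a \<in> {-1, 1}" "C / b \<in> {-1, 1}"
    then have "(\<lambda>p. z p - (A / a * a * (fst p)\<^sup>2 + C / b * b * (snd p)\<^sup>2) / 2)
        \<in> O[at (0, 0)](\<lambda>p. norm1 p ^ 3)"
      using jet assms(4,5) by (simp add: add_divide_distrib)
    moreover from this
    have "(\<lambda>p. z (fst p * cos 0 + snd p * sin 0, - fst p * sin 0 + snd p * cos 0)
        - (A / a * a * (fst p)\<^sup>2 + C / b * b * (snd p)\<^sup>2) / 2) \<in> O[at (0, 0)](\<lambda>p. norm1 p ^ 3)"
      by simp
    ultimately show ?thesis
      using signs by blast
  next
    assume "C = - A" and "a = b"
    obtain \<xi> where diagonal: "\<And>p. A / 2 * (fst (rotate \<xi> p))\<^sup>2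
        + B * fst (rotate \<xi> p) * snd (rotate \<xi> p) - A / 2 * (snd (rotate \<xi> p))\<^sup>2
        = a / 2 * (fst p)\<^sup>2 - a / 2 * (snd p)\<^sup>2"
      using rotate_traceless_quadratic_form[OF circle assms(4)] by blast
    have "(\<lambda>p. z (rotate \<xi> p) - (1 * a * (fst p)\<^sup>2 + (- 1) * b * (snd p)\<^sup>2) / 2)
        \<in> O[at (0, 0)](\<lambda>p. norm1 p ^ 3)"
      using bigo_norm1_rotate[OF jet, of \<xi>] diagonal \<open>C = - A\<close> \<open>a = b\<close>
      by (simp add: diff_divide_distrib)
    with \<open>a = b\<close> show ?thesis
      unfolding rotate_def by (intro conjI impI exI[of _ \<xi>] exI[of _ 1] exI[of _ "-1"]) auto
  qed
qed

end
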